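(* Let $c<1$ be a constant and $p=p(n)=\frac{c}{n}$. Then $\mathbb{P}_{n,p}\big(G \text{ is realizable in } \mathbb{R}^2 \text{ as a distance graph}\big)\to 1$ as $n\to\infty$, where $G$ is the random graph $G(n,p)$.
   Context: $G(n,p)$ is the Erdős–Rényi random graph on $n$ labelled vertices in which each of the $\binom n2$ possible edges is present independently with probability $p$ ($p$ may depend on $n$); $\mathbb{P}_{n,p}$ is the corresponding probability. A distance graph in $\mathbb{R}^d$ is a finite graph $(V,E)$ with $V\subset\mathbb{R}^d$ finite and $E\subseteq\{\{\mathbf{x},\mathbf{y}\}\subseteq V: |\mathbf{x}-\mathbf{y}|=1\}$ (Euclidean norm). A graph is realizable in $\mathbb{R}^d$ as a distance graph if it is isomorphic to some distance graph in $\mathbb{R}^d$, i.e. its vertices can be mapped injectively to points of $\mathbb{R}^d$ so that every edge joins two points at Euclidean distance $1$. *)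

theory Defs
  imports "HOL-Analysis.Analysis"
begin

definition all_edges :: "nat \<Rightarrow> nat set set" where
  "all_edges n = {e. \<exists>u v. u < n \<and> v < n \<and> u \<noteq> v \<and> e = {u, v}}"

definition gnp_prob :: "nat \<Rightarrow> real \<Rightarrow> (nat set set \<Rightarrow> bool) \<Rightarrow> real" where
  "gnp_prob n p P =
     (\<Sum>E\<in>{E. E \<subseteq> all_edges n \<and> P E}.
        p ^ card E * (1 - p) ^ (card (all_edges n) - card E))"

definition distance_realizable_R2 :: "nat set \<Rightarrow> nat set set \<Rightarrow> bool" where
  "distance_realizable_R2 V E =
     (\<exists>f :: nat \<Rightarrow> real^2. inj_on f V \<and>
        (\<forall>e\<in>E. \<forall>u\<in>e. \<forall>v\<in>e. u \<noteq> v \<longrightarrow> dist (f u) (f v) = 1))"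

end

theory Submission
  imports Defs
begin

text \<open>A graph in which no path carries a chord at each of its two ends (a subgraph with one more
  edge than vertices) is a unit-distance graph in the plane. Induct on the number of vertices. A
  vertex of degree at most one is put on the unit circle around its neighbour, avoiding the
  finitely many points already used. If all degrees are at least two, both ends of a longest path
  have all their neighbours on the path, so each end has a chord; the only way for these not to
  form a forbidden configuration is that the path closes into a cycle, and since every rotation of
  that cycle is again a longest path, no vertex of the cycle has any further neighbour. This cycle
  is a whole component and is drawn as a regular polygon with unit sides, translated far away from
  the rest.

  In \<open>G(n,p)\<close> a path on \<open>l\<close> vertices with two chords has \<open>l + 1\<close> edges, and there are at most
  \<open>n^l l^2\<close> of them, so for \<open>p = c/n\<close> the union bound gives probability at most
  \<open>(1/n) \<Sum>l. l^2 c^(l+1) = O(1/n)\<close> that one is present.\<close>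

section \<open>Events in G(n,p)\<close>

lemma finite_all_edges: "finite (all_edges n)"
  by (rule finite_subset[of _ "Pow {..<n}"]) (auto simp: all_edges_def)

lemma gnp_prob_supset:
  assumes "F \<subseteq> all_edges n"
  shows "gnp_prob n p (\<lambda>E. F \<subseteq> E) = p ^ card F"
proof -
  let ?A = "all_edges n"
  define g where "g x = (if x \<in> F then 0 else 1 - p)" for x
  have fin: "finite ?A" by (rule finite_all_edges)
  have "p ^ card F = (\<Prod>x\<in>?A. if x \<in> F then p else 1)"
    using assms fin by (simp add: prod.If_cases Int_absorb1 Int_absorb2)
  also have "\<dots> = (\<Prod>x\<in>?A. p + g x)"
    by (rule prod.cong) (auto simp: g_def)
  also have "\<dots> = (\<Sum>X\<in>Pow ?A. (\<Prod>x\<in>X. p) * (\<Prod>x\<in>?A - X. g x))"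
    by (rule prod_add[OF fin])
  also have "\<dots> = (\<Sum>X | X \<subseteq> ?A \<and> F \<subseteq> X. (\<Prod>x\<in>X. p) * (\<Prod>x\<in>?A - X. g x))"
  proof (rule sum.mono_neutral_right)
    show "\<forall>X\<in>Pow ?A - {X. X \<subseteq> ?A \<and> F \<subseteq> X}. (\<Prod>x\<in>X. p) * (\<Prod>x\<in>?A - X. g x) = 0"
    proof
      fix X assume "X \<in> Pow ?A - {X. X \<subseteq> ?A \<and> F \<subseteq> X}"
      then obtain x where "x \<in> F" "x \<notin> X" by auto
      hence "x \<in> ?A - X" "g x = 0" using assms by (auto simp: g_def)
      thus "(\<Prod>x\<in>X. p) * (\<Prod>x\<in>?A - X. g x) = 0" using fin prod_zero[of "?A - X" g] by auto
    qed
  qed (use fin in auto)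
  also have "\<dots> = gnp_prob n p (\<lambda>E. F \<subseteq> E)"
    unfolding gnp_prob_def
  proof (rule sum.cong[OF refl])
    fix X assume X: "X \<in> {X. X \<subseteq> ?A \<and> F \<subseteq> X}"
    hence "(\<Prod>x\<in>?A - X. g x) = (\<Prod>x\<in>?A - X. 1 - p)" by (intro prod.cong) (auto simp: g_def)
    with X fin show "(\<Prod>x\<in>X. p) * (\<Prod>x\<in>?A - X. g x) = p ^ card X * (1 - p) ^ (card ?A - card X)"
      by (simp add: card_Diff_subset finite_subset[OF _ fin])
  qed
  finally show ?thesis by (rule sym)
qed

lemma gnp_prob_True: "gnp_prob n p (\<lambda>E. True) = 1"
  using gnp_prob_supset[of "{}" n p] by simp

lemma finite_gnp_events: "finite {E. E \<subseteq> all_edges n \<and> P E}"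
  by (rule finite_subset[of _ "Pow (all_edges n)"]) (auto simp: finite_all_edges)

lemma gnp_prob_not: "gnp_prob n p (\<lambda>E. \<not> P E) = 1 - gnp_prob n p P"
proof -
  have "gnp_prob n p (\<lambda>E. True) = gnp_prob n p P + gnp_prob n p (\<lambda>E. \<not> P E)"
    unfolding gnp_prob_def
    by (subst sum.union_disjoint[symmetric]) (auto intro: finite_gnp_events intro!: sum.cong)
  thus ?thesis by (simp add: gnp_prob_True)
qed

lemma gnp_prob_mono:
  assumes "0 \<le> p" "p \<le> 1" "\<And>E. E \<subseteq> all_edges n \<Longrightarrow> P E \<Longrightarrow> Q E"
  shows "gnp_prob n p P \<le> gnp_prob n p Q"
  unfolding gnp_prob_def using assms by (intro sum_mono2 finite_gnp_events) auto

lemma gnp_prob_le_1: "0 \<le> p \<Longrightarrow> p \<le> 1 \<Longrightarrow> gnp_prob n p P \<le> 1"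
  using gnp_prob_mono[of p n P "\<lambda>_. True"] by (simp add: gnp_prob_True)

lemma gnp_prob_disj_le:
  assumes "0 \<le> p" "p \<le> 1"
  shows "gnp_prob n p (\<lambda>E. P E \<or> Q E) \<le> gnp_prob n p P + gnp_prob n p Q"
proof -
  have "{E. E \<subseteq> all_edges n \<and> (P E \<or> Q E)} =
        {E. E \<subseteq> all_edges n \<and> P E} \<union> {E. E \<subseteq> all_edges n \<and> Q E}"
    by auto
  thus ?thesis unfolding gnp_prob_def
    using assms by (simp add: sum_Un finite_gnp_events sum_nonneg)
qed

lemma gnp_prob_Bex_le:
  assumes "0 \<le> p" "p \<le> 1" "finite I"
  shows "gnp_prob n p (\<lambda>E. \<exists>k\<in>I. Q k E) \<le> (\<Sum>k\<in>I. gnp_prob n p (Q k))"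
  using assms(3)
proof (induction I rule: finite_induct)
  case empty
  show ?case by (simp add: gnp_prob_def)
next
  case (insert a I)
  have "gnp_prob n p (\<lambda>E. \<exists>k\<in>insert a I. Q k E)
          \<le> gnp_prob n p (Q a) + gnp_prob n p (\<lambda>E. \<exists>k\<in>I. Q k E)"
    using gnp_prob_disj_le[OF assms(1,2)] by simp
  with insert show ?case by simp
qed

section \<open>Paths with two chords\<close>

text \<open>The excluded case
  \<open>i = l - 1, j = 0\<close> is a cycle whose closing edge would be counted twice.\<close>

definition two_chord_path :: "'v list \<Rightarrow> nat \<Rightarrow> nat \<Rightarrow> bool" where
  "two_chord_path xs i j \<longleftrightarrow> distinct xs \<and> 3 \<le> length xs \<and> 2 \<le> i \<and> i < length xs \<and>
     j + 3 \<le> length xs \<and> \<not> (i = length xs - 1 \<and> j = 0)"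

definition two_chord_edges :: "'v list \<Rightarrow> nat \<Rightarrow> nat \<Rightarrow> 'v set set" where
  "two_chord_edges xs i j = (\<lambda>k. {xs!k, xs!Suc k}) ` {..<length xs - 1} \<union>
     {{xs!0, xs!i}, {xs!(length xs - 1), xs!j}}"

definition has_two_chord_path :: "'v set set \<Rightarrow> bool" where
  "has_two_chord_path E \<longleftrightarrow> (\<exists>xs i j. two_chord_path xs i j \<and> two_chord_edges xs i j \<subseteq> E)"

lemma nth_mem_path_edgeD:
  assumes "distinct xs" "a < length xs" "Suc k < length xs" "xs!a \<in> {xs!k, xs!Suc k}"
  shows "a = k \<or> a = Suc k"
  using assms nth_eq_iff_index_eq[OF assms(1), of a k]
    nth_eq_iff_index_eq[OF assms(1), of a "Suc k"] by auto

lemma inj_on_path_edges: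
  assumes "distinct xs"
  shows "inj_on (\<lambda>k. {xs!k, xs!Suc k}) {..<length xs - 1}"
proof (rule inj_onI)
  fix k l assume "k \<in> {..<length xs - 1}" "l \<in> {..<length xs - 1}"
    "{xs!k, xs!Suc k} = {xs!l, xs!Suc l}"
  hence "Suc k < length xs" "Suc l < length xs" "xs!k \<in> {xs!l, xs!Suc l}" "xs!l \<in> {xs!k, xs!Suc k}"
    by auto
  hence "k = l \<or> k = Suc l" "l = k \<or> l = Suc k"
    using nth_mem_path_edgeD[OF assms] by (metis Suc_lessD)+
  thus "k = l" by auto
qed

lemma card_two_chord_edges:
  assumes "two_chord_path xs i j"
  shows "card (two_chord_edges xs i j) = length xs + 1"
proof -
  let ?m = "length xs - 1"
  let ?f = "\<lambda>k. {xs!k, xs!Suc k}"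
  have L: "3 \<le> length xs" and i: "2 \<le> i" "i < length xs" and j: "j + 3 \<le> length xs"
    and ij: "\<not> (i = ?m \<and> j = 0)"
    using assms by (auto simp: two_chord_path_def)
  have eq: "xs!a = xs!b \<longleftrightarrow> a = b" if "a < length xs" "b < length xs" for a b
    using assms that by (simp add: two_chord_path_def nth_eq_iff_index_eq)
  have d: "distinct xs" using assms by (simp add: two_chord_path_def)
  note mem = nth_mem_path_edgeD[OF d]
  have "inj_on ?f {..<?m}" using d by (rule inj_on_path_edges)
  hence "card (?f ` {..<?m}) = ?m" by (simp add: card_image)
  moreover have "{xs!0, xs!i} \<notin> ?f ` {..<?m}"
  proof
    assume "{xs!0, xs!i} \<in> ?f ` {..<?m}"
    then obtain k where "k < ?m" "{xs!0, xs!i} = ?f k" by auto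
    hence "Suc k < length xs" "xs!0 \<in> ?f k" "xs!i \<in> ?f k" by auto
    hence "0 = k \<or> 0 = Suc k" "i = k \<or> i = Suc k" using i by (metis mem zero_less_Suc less_trans)+
    thus False using i by auto
  qed
  moreover have "{xs!?m, xs!j} \<notin> ?f ` {..<?m}"
  proof
    assume "{xs!?m, xs!j} \<in> ?f ` {..<?m}"
    then obtain k where "k < ?m" "{xs!?m, xs!j} = ?f k" by auto
    hence "Suc k < length xs" "xs!?m \<in> ?f k" "xs!j \<in> ?f k" by auto
    moreover have "?m < length xs" "j < length xs" using j by auto
    ultimately have "?m = k \<or> ?m = Suc k" "j = k \<or> j = Suc k" by (metis mem)+
    thus False using \<open>Suc k < length xs\<close> j by auto
  qed
  moreover have "{xs!0, xs!i} \<noteq> {xs!?m, xs!j}"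
  proof
    assume e: "{xs!0, xs!i} = {xs!?m, xs!j}"
    have "xs!0 \<noteq> xs!?m" using eq[of 0 ?m] L by force
    hence "xs!0 = xs!j" "xs!i = xs!?m" using e by (auto simp: doubleton_eq_iff)
    thus False using eq[of 0 j] eq[of i ?m] i j L ij by force
  qed
  ultimately show ?thesis
    using L unfolding two_chord_edges_def by (simp add: card_insert_if)
qed

lemma two_chord_edges_subset_all_edges:
  assumes "two_chord_path xs i j" "set xs \<subseteq> {..<n}"
  shows "two_chord_edges xs i j \<subseteq> all_edges n"
proof -
  have edge: "{xs!a, xs!b} \<in> all_edges n" if "a < length xs" "b < length xs" "a \<noteq> b" for a b
  proof -
    have "xs!a \<noteq> xs!b" using assms(1) that by (simp add: two_chord_path_def nth_eq_iff_index_eq)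
    moreover have "xs!a < n" "xs!b < n" using assms(2) that by (auto dest!: nth_mem)
    ultimately show ?thesis unfolding all_edges_def by blast
  qed
  have "3 \<le> length xs" "2 \<le> i" "i < length xs" "j + 3 \<le> length xs"
    using assms(1) by (auto simp: two_chord_path_def)
  thus ?thesis unfolding two_chord_edges_def by (auto intro!: edge)
qed

lemma two_chord_path_vertices:
  assumes "two_chord_path xs i j" "two_chord_edges xs i j \<subseteq> all_edges n"
  shows "set xs \<subseteq> {..<n}"
proof
  fix x assume "x \<in> set xs"
  then obtain k where k: "k < length xs" "x = xs!k" by (auto simp: in_set_conv_nth)
  define l where "l = (if k = 0 then 0 else k - 1)"
  have "3 \<le> length xs" using assms(1) by (simp add: two_chord_path_def)
  hence "l < length xs - 1" "x \<in> {xs!l, xs!Suc l}" using k by (auto simp: l_def)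
  moreover from this(1) have "{xs!l, xs!Suc l} \<in> all_edges n"
    using assms(2) unfolding two_chord_edges_def by blast
  ultimately show "x \<in> {..<n}" unfolding all_edges_def by force
qed

lemma gnp_prob_two_chord_edges_le:
  assumes "0 \<le> p" "p \<le> 1" "set xs \<subseteq> {..<n}"
  shows "gnp_prob n p (\<lambda>E. two_chord_path xs i j \<and> two_chord_edges xs i j \<subseteq> E)
           \<le> p ^ (length xs + 1)"
proof (cases "two_chord_path xs i j")
  case True
  thus ?thesis using assms gnp_prob_supset[OF two_chord_edges_subset_all_edges[OF True assms(3)]]
    by (simp add: card_two_chord_edges)
qed (use assms in \<open>simp add: gnp_prob_def\<close>)

lemma gnp_prob_has_two_chord_path_le:
  assumes p: "0 \<le> p" "p \<le> 1"
  shows "gnp_prob n p has_two_chord_path \<le> (\<Sum>l\<le>n. real n ^ l * real l ^ 2 * p ^ (l + 1))"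
proof -
  define T where "T l = {xs. set xs \<subseteq> {..<n} \<and> length xs = l} \<times> {..<l} \<times> {..<l}" for l
  have finT: "finite (T l)" for l
    unfolding T_def by (simp add: finite_lists_length_eq)
  have cardT: "card (T l) = n ^ l * l ^ 2" for l
    unfolding T_def by (simp add: card_cartesian_product card_lists_length_eq power2_eq_square)
  define W :: "nat list \<times> nat \<times> nat \<Rightarrow> nat set set \<Rightarrow> bool"
    where "W = (\<lambda>(xs, i, j) E. two_chord_path xs i j \<and> two_chord_edges xs i j \<subseteq> E)"
  have "gnp_prob n p has_two_chord_path \<le> gnp_prob n p (\<lambda>E. \<exists>l\<in>{..n}. \<exists>t\<in>T l. W t E)"
  proof (rule gnp_prob_mono[OF p])
    fix E assume E: "E \<subseteq> all_edges n" "has_two_chord_path E"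
    then obtain xs i j where w: "two_chord_path xs i j" "two_chord_edges xs i j \<subseteq> E"
      by (auto simp: has_two_chord_path_def)
    have xs: "set xs \<subseteq> {..<n}" using w E(1) by (intro two_chord_path_vertices) auto
    have "length xs \<le> n"
      using card_mono[OF _ xs] distinct_card w(1) by (fastforce simp: two_chord_path_def)
    moreover have "i < length xs" "j < length xs" using w(1) by (auto simp: two_chord_path_def)
    ultimately show "\<exists>l\<in>{..n}. \<exists>t\<in>T l. W t E"
      using xs w by (auto simp: T_def W_def)
  qed
  also have "\<dots> \<le> (\<Sum>l\<le>n. gnp_prob n p (\<lambda>E. \<exists>t\<in>T l. W t E))"
    by (rule gnp_prob_Bex_le[OF p]) simp
  also have "\<dots> \<le> (\<Sum>l\<le>n. \<Sum>t\<in>T l. gnp_prob n p (W t))"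
    by (intro sum_mono gnp_prob_Bex_le[OF p finT])
  also have "\<dots> \<le> (\<Sum>l\<le>n. \<Sum>t\<in>T l. p ^ (l + 1))"
    using gnp_prob_two_chord_edges_le[OF p] by (intro sum_mono) (auto simp: T_def W_def)
  also have "\<dots> = (\<Sum>l\<le>n. real n ^ l * real l ^ 2 * p ^ (l + 1))"
    by (simp add: cardT)
  finally show ?thesis .
qed

section \<open>Points in the plane\<close>

lemma exists_point_at_dist_notin:
  fixes a :: "'a::euclidean_space"
  assumes "2 \<le> DIM('a)" "finite B" "0 < r"
  shows "\<exists>z. dist a z = r \<and> z \<notin> B"
proof (rule ccontr)
  assume "\<nexists>z. dist a z = r \<and> z \<notin> B"
  hence "sphere a r \<subseteq> B" by auto
  hence "finite (sphere a r)" using assms(2) by (rule finite_subset)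
  then obtain b where "sphere a r \<subseteq> {b}"
    using connected_finite_iff_sing[OF connected_sphere[OF assms(1)]] by blast
  moreover obtain x :: 'a where x: "norm x = r"
    using vector_choose_size[OF less_imp_le[OF assms(3)]] by blast
  hence "a + x \<in> sphere a r" "a - x \<in> sphere a r"
    by (simp_all add: dist_norm)
  moreover have "a + x \<noteq> a - x"
  proof
    assume "a + x = a - x"
    hence "2 *\<^sub>R x = 0" by (simp add: scaleR_2 algebra_simps)
    thus False using x assms(3) by simp
  qed
  ultimately show False by blast
qed

lemma regular_polygon:
  assumes "2 \<le> L"
  obtains Q :: "nat \<Rightarrow> complex"
  where "\<And>s t. Q s = Q t \<longleftrightarrow> s mod L = t mod L" "\<And>s. dist (Q s) (Q (Suc s)) = 1"
    "bounded (range Q)"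
proof -
  define \<zeta> where "\<zeta> s = exp (2 * of_real pi * \<i> * of_nat s / of_nat L)" for s
  have \<zeta>_eq: "\<zeta> s = \<zeta> t \<longleftrightarrow> s mod L = t mod L" for s t
    unfolding \<zeta>_def using assms by (intro complex_root_unity_eq) simp
  have \<zeta>_Suc: "\<zeta> (Suc s) = \<zeta> s * \<zeta> 1" for s
    by (simp add: \<zeta>_def exp_add[symmetric] add_divide_distrib distrib_left add.commute)
  have norm_\<zeta>: "norm (\<zeta> s) = 1" for s
    by (simp add: \<zeta>_def norm_exp_eq_Re)
  have "\<zeta> 1 \<noteq> \<zeta> 0" using \<zeta>_eq[of 1 0] assms by simp
  hence \<zeta>1: "\<zeta> 1 - 1 \<noteq> 0" by (simp add: \<zeta>_def)
  define Q where "Q s = \<zeta> s / (\<zeta> 1 - 1)" for s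
  show thesis
  proof
    show "Q s = Q t \<longleftrightarrow> s mod L = t mod L" for s t
      using \<zeta>1 \<zeta>_eq by (simp add: Q_def)
    have "Q (Suc s) - Q s = \<zeta> s * (\<zeta> 1 - 1) / (\<zeta> 1 - 1)" for s
      unfolding Q_def \<zeta>_Suc by (simp add: diff_divide_distrib algebra_simps)
    hence "Q (Suc s) - Q s = \<zeta> s" for s using \<zeta>1 by simp
    thus "dist (Q s) (Q (Suc s)) = 1" for s
      by (metis dist_commute dist_norm norm_\<zeta>)
    show "bounded (range Q)"
      unfolding bounded_iff
      by (intro exI[of _ "1 / norm (\<zeta> 1 - 1)"]) (simp add: Q_def norm_divide norm_\<zeta>)
  qed
qed

lemma bounded_translate_disjoint:
  fixes S B :: "'a::real_normed_algebra_1 set"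
  assumes "bounded S" "bounded B"
  obtains a where "(+) a ` S \<inter> B = {}"
proof -
  obtain r rB where r: "\<And>x. x \<in> S \<Longrightarrow> norm x \<le> r" and rB: "\<And>y. y \<in> B \<Longrightarrow> norm y \<le> rB"
    using assms unfolding bounded_iff by blast
  define a :: 'a where "a = of_real (\<bar>r\<bar> + \<bar>rB\<bar> + 1)"
  have "rB < norm (a + x)" if "x \<in> S" for x
  proof -
    have "norm a - norm x \<le> norm (a + x)" by (rule norm_diff_ineq)
    moreover have "norm a = \<bar>r\<bar> + \<bar>rB\<bar> + 1" unfolding a_def norm_of_real by simp
    ultimately show ?thesis using r[OF that] by linarith
  qed
  hence "(+) a ` S \<inter> B = {}" using rB by force
  thus thesis by (rule that)
qed

section \<open>Graphs without paths with two chords\<close>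

definition graph_on :: "'v set \<Rightarrow> 'v set set \<Rightarrow> bool" where
  "graph_on V E \<longleftrightarrow> finite V \<and> (\<forall>e\<in>E. \<exists>a b. a \<in> V \<and> b \<in> V \<and> a \<noteq> b \<and> e = {a, b})"

definition neighbours :: "'v set set \<Rightarrow> 'v \<Rightarrow> 'v set" where
  "neighbours E v = {u. {v, u} \<in> E}"

definition walk :: "'v set set \<Rightarrow> 'v list \<Rightarrow> bool" where
  "walk E xs \<longleftrightarrow> (\<forall>k. Suc k < length xs \<longrightarrow> {xs!k, xs!Suc k} \<in> E)"

definition closed_walk :: "'v set set \<Rightarrow> 'v list \<Rightarrow> bool" where
  "closed_walk E xs \<longleftrightarrow> (\<forall>t<length xs. {xs!t, xs!(Suc t mod length xs)} \<in> E)"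

definition simple_path :: "'v set \<Rightarrow> 'v set set \<Rightarrow> 'v list \<Rightarrow> bool" where
  "simple_path V E xs \<longleftrightarrow> walk E xs \<and> distinct xs \<and> set xs \<subseteq> V \<and> xs \<noteq> []"

definition longest_path :: "'v set \<Rightarrow> 'v set set \<Rightarrow> 'v list \<Rightarrow> bool" where
  "longest_path V E xs \<longleftrightarrow>
     simple_path V E xs \<and> (\<forall>ys. simple_path V E ys \<longrightarrow> length ys \<le> length xs)"

definition neighbours_cyclic :: "'v set set \<Rightarrow> 'v list \<Rightarrow> bool" where
  "neighbours_cyclic E cs \<longleftrightarrow> (\<forall>t<length cs. neighbours E (cs!t) \<subseteq>
     {cs!(Suc t mod length cs), cs!((t + length cs - 1) mod length cs)})"

lemma graph_on_edgeD:
  assumes "graph_on V E" "{a, b} \<in> E"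
  shows "a \<noteq> b" "a \<in> V" "b \<in> V"
  using assms unfolding graph_on_def by (fastforce simp: doubleton_eq_iff)+

lemma graph_on_remove: "graph_on V E \<Longrightarrow> graph_on (V - S) {e\<in>E. e \<inter> S = {}}"
  unfolding graph_on_def by fastforce

lemma finite_neighbours: "graph_on V E \<Longrightarrow> finite (neighbours E v)"
  unfolding graph_on_def neighbours_def
  by (rule finite_subset[of _ V]) (auto simp: doubleton_eq_iff)

lemma has_two_chord_path_mono: "has_two_chord_path E' \<Longrightarrow> E' \<subseteq> E \<Longrightarrow> has_two_chord_path E"
  unfolding has_two_chord_path_def by blast

lemma walk_Cons: "walk E xs \<Longrightarrow> xs \<noteq> [] \<Longrightarrow> {y, xs!0} \<in> E \<Longrightarrow> walk E (y # xs)"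
  unfolding walk_def by (auto simp: nth_Cons split: nat.split)

lemma walk_snoc:
  assumes "walk E xs" "xs \<noteq> []" "{xs!(length xs - 1), y} \<in> E"
  shows "walk E (xs @ [y])"
  unfolding walk_def
proof (intro allI impI)
  fix k assume "Suc k < length (xs @ [y])"
  hence "Suc k < length xs \<or> k = length xs - 1" by auto
  thus "{(xs @ [y]) ! k, (xs @ [y]) ! Suc k} \<in> E"
    using assms by (auto simp: walk_def nth_append)
qed

lemma closed_walk_imp_walk: "closed_walk E xs \<Longrightarrow> walk E xs"
  unfolding closed_walk_def walk_def by (metis Suc_lessD mod_less)

lemma closed_walk_rotate: "closed_walk E xs \<Longrightarrow> closed_walk E (rotate k xs)"
  unfolding closed_walk_def
proof (intro allI impI)
  fix t assume c: "\<forall>t<length xs. {xs ! t, xs ! (Suc t mod length xs)} \<in> E"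
    and t: "t < length (rotate k xs)"
  let ?L = "length xs"
  have L: "0 < ?L" using t by (cases xs) auto
  have "rotate k xs ! (Suc t mod ?L) = xs ! (Suc ((k + t) mod ?L) mod ?L)"
    using L by (simp add: nth_rotate mod_add_right_eq mod_Suc_eq)
  moreover have "rotate k xs ! t = xs ! ((k + t) mod ?L)" using t by (simp add: nth_rotate)
  ultimately show "{rotate k xs ! t, rotate k xs ! (Suc t mod length (rotate k xs))} \<in> E"
    using c L by simp
qed

lemma exists_longest_path:
  assumes "finite V" "V \<noteq> {}"
  obtains xs where "longest_path V E xs"
proof -
  obtain v where "v \<in> V" using assms(2) by blast
  hence "simple_path V E [v]" by (simp add: simple_path_def walk_def)
  moreover have "length ys < Suc (card V)" if "simple_path V E ys" for ys
    using that card_mono[OF assms(1)] distinct_card unfolding simple_path_def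
    by (metis less_Suc_eq_le)
  ultimately show thesis
    using ex_has_greatest_nat[of "simple_path V E" "[v]" length "Suc (card V)"] that
    unfolding longest_path_def by blast
qed

lemma longest_path_rotate:
  "longest_path V E xs \<Longrightarrow> closed_walk E xs \<Longrightarrow> longest_path V E (rotate k xs)"
  using closed_walk_imp_walk[OF closed_walk_rotate]
  unfolding longest_path_def simple_path_def by auto

lemma longest_path_hd_neighbour:
  assumes "graph_on V E" "longest_path V E xs" "{xs!0, y} \<in> E"
  shows "y \<in> set xs"
proof (rule ccontr)
  assume "y \<notin> set xs"
  moreover have "walk E (y # xs)" using assms(2,3)
    by (intro walk_Cons) (auto simp: longest_path_def simple_path_def insert_commute)
  ultimately have "simple_path V E (y # xs)"
    using assms graph_on_edgeD(3)[OF assms(1,3)] by (auto simp: longest_path_def simple_path_def)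
  thus False using assms(2) unfolding longest_path_def by fastforce
qed

lemma longest_path_last_neighbour:
  assumes "graph_on V E" "longest_path V E xs" "{xs!(length xs - 1), y} \<in> E"
  shows "y \<in> set xs"
proof (rule ccontr)
  assume "y \<notin> set xs"
  moreover have "walk E (xs @ [y])" using assms(2,3)
    by (intro walk_snoc) (auto simp: longest_path_def simple_path_def)
  ultimately have "simple_path V E (xs @ [y])"
    using assms graph_on_edgeD(3)[OF assms(1,3)] by (auto simp: longest_path_def simple_path_def)
  thus False using assms(2) unfolding longest_path_def by fastforce
qed

lemma neighbour_index_avoiding:
  assumes "graph_on V E" "2 \<le> card (neighbours E v)" "neighbours E v \<subseteq> set xs"
    "distinct xs" "q < length xs" "xs!q = v"
  obtains k where "k < length xs" "k \<noteq> q" "k \<noteq> r" "{v, xs!k} \<in> E"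
proof -
  obtain a b where ab: "a \<in> neighbours E v" "b \<in> neighbours E v" "a \<noteq> b"
    using assms(2) by (metis One_nat_def card_le_Suc0_iff_eq not_less_eq_eq numeral_2_eq_2
        card.infinite zero_less_numeral not_le)
  obtain ka kb where k: "ka < length xs" "xs!ka = a" "kb < length xs" "xs!kb = b"
    using ab assms(3) by (metis in_mono in_set_conv_nth)
  have "{v, a} \<in> E" "{v, b} \<in> E" using ab by (auto simp: neighbours_def)
  moreover from this have "ka \<noteq> q" "kb \<noteq> q" "ka \<noteq> kb"
    using k ab(3) assms(6) graph_on_edgeD(1)[OF assms(1)] by auto
  ultimately show thesis using k that by metis
qed

lemma longest_path_closes:
  assumes G: "graph_on V E" and no: "\<not> has_two_chord_path E" and xs: "longest_path V E xs"
    and deg: "2 \<le> card (neighbours E (xs!0))" "2 \<le> card (neighbours E (xs!(length xs - 1)))"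
  shows "closed_walk E xs" "3 \<le> length xs"
proof -
  have walk: "walk E xs" and d: "distinct xs" and ne: "xs \<noteq> []"
    using xs by (auto simp: longest_path_def simple_path_def)
  define m where "m = length xs - 1"
  have Lm: "length xs = Suc m" using ne by (simp add: m_def)
  have nb: "neighbours E (xs!0) \<subseteq> set xs" "neighbours E (xs!m) \<subseteq> set xs"
    using longest_path_hd_neighbour[OF G xs] longest_path_last_neighbour[OF G xs]
    by (auto simp: neighbours_def m_def)
  obtain i where i: "i < length xs" "i \<noteq> 0" "i \<noteq> 1" "{xs!0, xs!i} \<in> E"
    by (rule neighbour_index_avoiding[OF G deg(1) nb(1) d, where q = 0 and r = 1])
      (use ne in auto)
  obtain j where j: "j < length xs" "j \<noteq> m" "j \<noteq> m - 1" "{xs!m, xs!j} \<in> E"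
    by (rule neighbour_index_avoiding[OF G deg(2)[folded m_def] nb(2) d,
          where q = m and r = "m - 1"]) (use Lm in auto)
  show L3: "3 \<le> length xs" using i by simp
  have "i = m \<and> j = 0"
  proof (rule ccontr)
    assume "\<not> (i = m \<and> j = 0)"
    hence "two_chord_path xs i j" using d L3 i j Lm by (simp add: two_chord_path_def)
    moreover have "two_chord_edges xs i j \<subseteq> E"
      using walk i(4) j(4) Lm unfolding two_chord_edges_def walk_def by auto
    ultimately show False using no by (auto simp: has_two_chord_path_def)
  qed
  hence closing: "{xs!m, xs!0} \<in> E" using i(4) by (simp add: insert_commute)
  show "closed_walk E xs" unfolding closed_walk_def
  proof (intro allI impI)
    fix t assume "t < length xs"
    hence "Suc t < length xs \<or> t = m" using Lm by auto
    thus "{xs!t, xs!(Suc t mod length xs)} \<in> E" using walk closing Lm by (auto simp: walk_def)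
  qed
qed

lemma longest_closed_walk_hd_neighbours:
  assumes G: "graph_on V E" and no: "\<not> has_two_chord_path E" and xs: "longest_path V E xs"
    and c: "closed_walk E xs" and L3: "3 \<le> length xs" and e: "{xs!0, y} \<in> E"
  shows "y = xs!1 \<or> y = xs!(length xs - 1)"
proof (rule ccontr)
  assume ny: "\<not> (y = xs!1 \<or> y = xs!(length xs - 1))"
  obtain i where i: "i < length xs" "xs!i = y"
    using longest_path_hd_neighbour[OF G xs e] by (auto simp: in_set_conv_nth)
  have "i \<noteq> 0" using graph_on_edgeD(1)[OF G e] i by (metis neq0_conv)
  moreover have "i \<noteq> 1" "i \<noteq> length xs - 1" using ny i by auto
  ultimately have "two_chord_path xs i 0"
    using xs L3 i by (auto simp: two_chord_path_def longest_path_def simple_path_def)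
  moreover have "{xs!(length xs - 1), xs!0} \<in> E"
    using c L3 unfolding closed_walk_def by (metis Suc_diff_1 diff_less less_le_trans mod_self
        numeral_3_eq_3 zero_less_Suc zero_less_one)
  hence "two_chord_edges xs i 0 \<subseteq> E"
    using closed_walk_imp_walk[OF c] e i unfolding two_chord_edges_def walk_def
    by (auto simp: less_diff_conv)
  ultimately show False using no by (auto simp: has_two_chord_path_def)
qed

lemma longest_closed_walk_neighbours_cyclic:
  assumes G: "graph_on V E" and no: "\<not> has_two_chord_path E" and xs: "longest_path V E xs"
    and c: "closed_walk E xs" and L3: "3 \<le> length xs"
  shows "neighbours_cyclic E xs"
  unfolding neighbours_cyclic_def
proof (intro allI impI subsetI)
  fix t y assume t: "t < length xs" and y: "y \<in> neighbours E (xs!t)"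
  have "xs \<noteq> []" using L3 by auto
  hence "rotate t xs ! 0 = xs ! t" using t nth_rotate[of 0 xs t] by simp
  hence e: "{rotate t xs ! 0, y} \<in> E" using y by (simp add: neighbours_def)
  let ?L = "length xs"
  have "y = rotate t xs ! 1 \<or> y = rotate t xs ! (length (rotate t xs) - 1)"
    using longest_closed_walk_hd_neighbours[OF G no longest_path_rotate[OF xs c]
        closed_walk_rotate[OF c]] L3 e by simp
  moreover have "rotate t xs ! 1 = xs ! (Suc t mod ?L)"
    "rotate t xs ! (?L - 1) = xs ! ((t + ?L - 1) mod ?L)"
    using L3 by (simp_all add: nth_rotate)
  ultimately show "y \<in> {xs!(Suc t mod ?L), xs!((t + ?L - 1) mod ?L)}" by auto
qed

lemma neighbours_cyclic_subset:
  assumes "neighbours_cyclic E cs" "b \<in> set cs"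
  shows "neighbours E b \<subseteq> set cs"
proof -
  obtain t where t: "t < length cs" "b = cs!t" using assms(2) by (auto simp: in_set_conv_nth)
  hence "neighbours E b \<subseteq> {cs!(Suc t mod length cs), cs!((t + length cs - 1) mod length cs)}"
    using assms(1) by (simp add: neighbours_cyclic_def)
  moreover have "0 < length cs" using t by linarith
  hence "Suc t mod length cs < length cs" "(t + length cs - 1) mod length cs < length cs"
    by simp_all
  ultimately show ?thesis by auto
qed

lemma exists_neighbours_cyclic:
  assumes G: "graph_on V E" and no: "\<not> has_two_chord_path E" and "V \<noteq> {}"
    and deg: "\<And>v. v \<in> V \<Longrightarrow> 2 \<le> card (neighbours E v)"
  obtains cs where "distinct cs" "set cs \<subseteq> V" "3 \<le> length cs" "neighbours_cyclic E cs"
proof -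
  obtain xs where xs: "longest_path V E xs"
    using exists_longest_path G \<open>V \<noteq> {}\<close> by (metis graph_on_def)
  hence "set xs \<subseteq> V" "xs \<noteq> []" "distinct xs" by (auto simp: longest_path_def simple_path_def)
  moreover from this have "xs!0 \<in> V" "xs!(length xs - 1) \<in> V" by auto
  hence "closed_walk E xs" "3 \<le> length xs" using longest_path_closes[OF G no xs] deg by auto
  ultimately show thesis
    using that longest_closed_walk_neighbours_cyclic[OF G no xs] by blast
qed

definition unit_embedding :: "'v set \<Rightarrow> 'v set set \<Rightarrow> ('v \<Rightarrow> 'a::metric_space) \<Rightarrow> bool" where
  "unit_embedding V E f \<longleftrightarrow>
     inj_on f V \<and> (\<forall>a\<in>V. \<forall>b\<in>V. {a, b} \<in> E \<longrightarrow> a \<noteq> b \<longrightarrow> dist (f a) (f b) = 1)"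

lemma unit_embedding_mono_edges:
  assumes "unit_embedding V E' f" "\<And>a b. a \<in> V \<Longrightarrow> b \<in> V \<Longrightarrow> {a, b} \<in> E \<Longrightarrow> {a, b} \<in> E'"
  shows "unit_embedding V E f"
  using assms unfolding unit_embedding_def by blast

lemma unit_embedding_insert:
  fixes f :: "'v \<Rightarrow> 'a::euclidean_space"
  assumes "2 \<le> DIM('a)" "unit_embedding V E f" "finite V" "v \<notin> V"
    and "\<And>a. a \<in> V \<Longrightarrow> {v, a} \<in> E \<Longrightarrow> a = u"
  obtains z where "unit_embedding (insert v V) E (f(v := z))"
proof -
  obtain z where z: "dist (f u) z = 1" "z \<notin> f ` V"
    using exists_point_at_dist_notin[OF assms(1) finite_imageI[OF assms(3)], of 1 "f u"] by auto
  have "inj_on (f(v := z)) V"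
    using assms(2) z(2) by (simp add: unit_embedding_def inj_on_fun_updI)
  hence "inj_on (f(v := z)) (insert v V)" using assms(4) z(2) by auto
  moreover have "dist ((f(v := z)) a) ((f(v := z)) b) = 1"
    if "a \<in> insert v V" "b \<in> insert v V" "{a, b} \<in> E" "a \<noteq> b" for a b
  proof (cases "a = v \<or> b = v")
    case True
    hence "{v, a} \<in> E \<and> b = v \<and> a \<in> V \<or> {v, b} \<in> E \<and> a = v \<and> b \<in> V"
      using that by (auto simp: insert_commute)
    thus ?thesis using assms(4,5) z(1) that(4) by (auto simp: dist_commute)
  next
    case False
    thus ?thesis using that assms(2) by (simp add: unit_embedding_def)
  qed
  ultimately have "unit_embedding (insert v V) E (f(v := z))"
    unfolding unit_embedding_def by blast
  thus thesis by (rule that)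
qed

lemma unit_embedding_Un:
  assumes "unit_embedding A E f" "unit_embedding B E g" "f ` A \<inter> g ` B = {}"
    and "\<And>a b. a \<in> A \<Longrightarrow> b \<in> B \<Longrightarrow> {a, b} \<notin> E"
  shows "unit_embedding (A \<union> B) E (\<lambda>v. if v \<in> B then g v else f v)"
proof -
  let ?k = "\<lambda>v. if v \<in> B then g v else f v"
  have "inj_on ?k (A \<union> B)"
  proof (rule inj_onI)
    fix x y assume "x \<in> A \<union> B" "y \<in> A \<union> B" "?k x = ?k y"
    thus "x = y" using assms(1-3)
      by (cases "x \<in> B"; cases "y \<in> B") (auto simp: unit_embedding_def dest: inj_onD)
  qed
  moreover have "dist (?k a) (?k b) = 1"
    if "a \<in> A \<union> B" "b \<in> A \<union> B" "{a, b} \<in> E" "a \<noteq> b" for a b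
    using that assms(1,2) assms(4)[of a b] assms(4)[of b a]
    by (cases "a \<in> B"; cases "b \<in> B") (auto simp: unit_embedding_def insert_commute)
  ultimately show ?thesis unfolding unit_embedding_def by blast
qed

lemma unit_embedding_cycle:
  assumes "distinct cs" "2 \<le> length cs" "neighbours_cyclic E cs" "bounded B"
  obtains h :: "'v \<Rightarrow> complex" where "unit_embedding (set cs) E h" "h ` set cs \<inter> B = {}"
proof -
  define L where "L = length cs"
  obtain Q :: "nat \<Rightarrow> complex" where Q_eq: "\<And>s t. Q s = Q t \<longleftrightarrow> s mod L = t mod L"
    and Q_step: "\<And>s. dist (Q s) (Q (Suc s)) = 1" and "bounded (range Q)"
    using regular_polygon assms(2) unfolding L_def by blast
  then obtain a where a: "(+) a ` range Q \<inter> B = {}"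
    using bounded_translate_disjoint assms(4) by blast
  define h where "h v = a + Q (the_inv_into {..<L} ((!) cs) v)" for v
  have inj: "inj_on ((!) cs) {..<L}" using assms(1) by (simp add: inj_on_nth L_def)
  have h: "h (cs!t) = a + Q t" if "t < L" for t
    using the_inv_into_f_f[OF inj] that by (simp add: h_def)
  have Q_neighbour: "dist (Q s) (Q t) = 1"
    if "t mod L = Suc s mod L \<or> Suc t mod L = s mod L" for s t
    using that Q_eq[of t "Suc s"] Q_eq[of s "Suc t"] Q_step[of s] Q_step[of t]
    by (auto simp: dist_commute)
  have far: "h ` set cs \<inter> B = {}"
    using a by (auto simp: in_set_conv_nth L_def h disjoint_iff)
  have "inj_on h (set cs)"
  proof (rule inj_onI)
    fix x y assume "x \<in> set cs" "y \<in> set cs" "h x = h y"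
    then obtain s t where "s < L" "t < L" "x = cs!s" "y = cs!t" "Q s = Q t"
      by (auto simp: in_set_conv_nth L_def h)
    thus "x = y" using Q_eq by simp
  qed
  moreover have "dist (h x) (h y) = 1" if xy: "x \<in> set cs" "{x, y} \<in> E" for x y
  proof -
    obtain s where s: "s < L" "x = cs!s" using xy(1) by (auto simp: in_set_conv_nth L_def)
    have "y \<in> {cs!(Suc s mod L), cs!((s + L - 1) mod L)}"
      using assms(3) s xy(2) by (auto simp: neighbours_cyclic_def neighbours_def L_def)
    moreover have "Suc ((s + L - 1) mod L) mod L = s mod L"
      using s by (simp add: mod_Suc_eq)
    ultimately show ?thesis
      using s Q_neighbour[of s "Suc s mod L"] Q_neighbour[of s "(s + L - 1) mod L"] h
      by (auto simp: dist_add_cancel dist_commute)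
  qed
  ultimately have "unit_embedding (set cs) E h" unfolding unit_embedding_def by blast
  thus thesis using far by (rule that)
qed

lemma unit_embedding_extend_leaf:
  fixes f :: "'v \<Rightarrow> 'a::euclidean_space"
  assumes "2 \<le> DIM('a)" "graph_on V E" "v \<in> V" "card (neighbours E v) < 2"
    and f: "unit_embedding (V - {v}) E f"
  shows "\<exists>g :: 'v \<Rightarrow> 'a. unit_embedding V E g"
proof -
  have "card (neighbours E v) \<le> Suc 0" using assms(4) by simp
  hence "\<forall>x\<in>neighbours E v. \<forall>y\<in>neighbours E v. x = y"
    using card_le_Suc0_iff_eq[OF finite_neighbours[OF assms(2)]] by blast
  then obtain u where "neighbours E v \<subseteq> {u}" by blast
  hence nbr: "\<And>a. a \<in> V - {v} \<Longrightarrow> {v, a} \<in> E \<Longrightarrow> a = u"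
    by (auto simp: neighbours_def)
  obtain z where "unit_embedding (insert v (V - {v})) E (f(v := z))"
    by (rule unit_embedding_insert[OF assms(1) f _ _ nbr])
      (use assms(2) in \<open>auto simp: graph_on_def\<close>)
  thus ?thesis using assms(3) by (metis insert_Diff)
qed

lemma unit_embedding_extend_cycle:
  fixes f :: "'v \<Rightarrow> complex"
  assumes "finite V" and cs: "distinct cs" "set cs \<subseteq> V" "2 \<le> length cs" "neighbours_cyclic E cs"
    and f: "unit_embedding (V - set cs) E f"
  shows "\<exists>g :: 'v \<Rightarrow> complex. unit_embedding V E g"
proof -
  obtain h where h: "unit_embedding (set cs) E h" "h ` set cs \<inter> f ` (V - set cs) = {}"
    by (rule unit_embedding_cycle[OF cs(1,3,4), where B = "f ` (V - set cs)"])
      (use assms(1) in \<open>auto intro: finite_imp_bounded\<close>)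
  have "f ` (V - set cs) \<inter> h ` set cs = {}" using h(2) by blast
  moreover have "{a, b} \<notin> E" if "a \<in> V - set cs" "b \<in> set cs" for a b
  proof
    assume "{a, b} \<in> E"
    hence "a \<in> neighbours E b" by (simp add: neighbours_def insert_commute)
    thus False using that neighbours_cyclic_subset[OF cs(4) that(2)] by blast
  qed
  ultimately have "unit_embedding ((V - set cs) \<union> set cs) E (\<lambda>v. if v \<in> set cs then h v else f v)"
    by (rule unit_embedding_Un[OF f h(1)])
  moreover have "(V - set cs) \<union> set cs = V" using cs(2) by blast
  ultimately show ?thesis by auto
qed

lemma unit_embedding_exists:
  assumes "graph_on V E" "\<not> has_two_chord_path E"
  shows "\<exists>f :: 'v \<Rightarrow> complex. unit_embedding V E f"
  using assms
proof (induction "card V" arbitrary: V E rule: less_induct)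
  case less
  note G = less.prems(1) and no = less.prems(2)
  have fin: "finite V" using G by (simp add: graph_on_def)
  have IH: "\<exists>f :: 'v \<Rightarrow> complex. unit_embedding (V - S) E f" if "S \<subseteq> V" "S \<noteq> {}" for S
  proof -
    have "card (V - S) < card V"
      using that fin by (intro psubset_card_mono) auto
    moreover have "\<not> has_two_chord_path {e\<in>E. e \<inter> S = {}}"
      using no has_two_chord_path_mono[of "{e\<in>E. e \<inter> S = {}}" E] by blast
    ultimately have "\<exists>f :: 'v \<Rightarrow> complex. unit_embedding (V - S) {e\<in>E. e \<inter> S = {}} f"
      by (rule less.hyps[OF _ graph_on_remove[OF G]])
    then obtain f :: "'v \<Rightarrow> complex" where "unit_embedding (V - S) {e\<in>E. e \<inter> S = {}} f" ..
    hence "unit_embedding (V - S) E f" by (rule unit_embedding_mono_edges) auto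
    thus ?thesis by blast
  qed
  consider (leaf) v where "v \<in> V" "card (neighbours E v) < 2" | (empty) "V = {}"
    | (core) "V \<noteq> {}" "\<And>v. v \<in> V \<Longrightarrow> 2 \<le> card (neighbours E v)"
    using not_le by blast
  then show ?case
  proof cases
    case leaf
    then obtain f :: "'v \<Rightarrow> complex" where f: "unit_embedding (V - {v}) E f"
      using IH[of "{v}"] by auto
    show ?thesis using unit_embedding_extend_leaf[OF _ G leaf f] by simp
  next
    case empty
    thus ?thesis by (auto simp: unit_embedding_def)
  next
    case core
    obtain cs where cs: "distinct cs" "set cs \<subseteq> V" "3 \<le> length cs" "neighbours_cyclic E cs"
      using exists_neighbours_cyclic[OF G no core] by blast
    have "set cs \<noteq> {}" using cs(3) by auto
    then obtain f :: "'v \<Rightarrow> complex" where "unit_embedding (V - set cs) E f"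
      using IH[OF cs(2)] by blast
    thus ?thesis using unit_embedding_extend_cycle[OF fin cs(1,2) _ cs(4)] cs(3) by simp
  qed
qed

lemma distance_realizable_R2_if_no_two_chord_path:
  assumes "E \<subseteq> all_edges n" "\<not> has_two_chord_path E"
  shows "distance_realizable_R2 {0..<n} E"
proof -
  have "graph_on {0..<n} E" using assms(1) unfolding graph_on_def all_edges_def by fastforce
  then obtain f :: "nat \<Rightarrow> complex" where f: "unit_embedding {0..<n} E f"
    using unit_embedding_exists assms(2) by blast
  have "DIM(complex) = DIM(real^2)" by simp
  then obtain \<phi> :: "complex \<Rightarrow> real^2" where "linear \<phi>" "\<And>x. norm (\<phi> x) = norm x"
    using isomorphisms_UNIV_UNIV by metis
  hence dist_\<phi>: "dist (\<phi> x) (\<phi> y) = dist x y" for x y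
    by (simp add: dist_norm linear_diff[symmetric])
  have "inj_on (\<phi> \<circ> f) {0..<n}"
    using f dist_\<phi> unfolding unit_embedding_def inj_on_def by (metis comp_apply dist_eq_0_iff)
  moreover have "dist ((\<phi> \<circ> f) u) ((\<phi> \<circ> f) v) = 1" if "e \<in> E" "u \<in> e" "v \<in> e" "u \<noteq> v" for e u v
  proof -
    have "e = {u, v}" "u < n" "v < n" using that assms(1) unfolding all_edges_def by auto
    thus ?thesis using that f dist_\<phi> by (simp add: unit_embedding_def)
  qed
  ultimately show ?thesis unfolding distance_realizable_R2_def by blast
qed

section \<open>Sparse random graphs\<close>

lemma summable_sq_times_power:
  fixes c :: real
  assumes "0 \<le> c" "c < 1"
  shows "summable (\<lambda>l. real l ^ 2 * c ^ (l + 1))"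
proof -
  define e where "e = root 3 c"
  have e: "0 \<le> e" "e < 1" "c = e ^ 3" using assms by (auto simp: e_def)
  have "(\<lambda>l. real l * e ^ l) \<longlonglongrightarrow> 0"
    using e by (intro powser_times_n_limit_0) simp
  hence "eventually (\<lambda>l. real l * e ^ l < 1) sequentially"
    by (rule order_tendstoD) simp
  hence "eventually (\<lambda>l. norm (real l ^ 2 * c ^ (l + 1)) \<le> e ^ l) sequentially"
  proof (rule eventually_mono)
    fix l assume le1: "real l * e ^ l < 1"
    have "norm (real l ^ 2 * c ^ (l + 1)) = (real l * e ^ l) ^ 2 * e ^ l * c"
      using e by (simp add: power_mult[symmetric] power2_eq_square power3_eq_cube
          algebra_simps)
    also have "\<dots> \<le> 1 * e ^ l * 1"
      using le1 e assms by (intro mult_mono power_le_one) auto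
    finally show "norm (real l ^ 2 * c ^ (l + 1)) \<le> e ^ l" by simp
  qed
  moreover have "summable (\<lambda>l. e ^ l)" using e by (intro summable_geometric) simp
  ultimately show ?thesis by (rule summable_comparison_test_ev)
qed

lemma gnp_prob_distance_realizable_R2_ge:
  fixes c :: real
  assumes "0 \<le> c" "c < 1" "1 \<le> n"
  shows "1 - (\<Sum>l. real l ^ 2 * c ^ (l + 1)) / real n
           \<le> gnp_prob n (c / real n) (distance_realizable_R2 {0..<n})"
proof -
  let ?p = "c / real n"
  have p: "0 \<le> ?p" "?p \<le> 1" using assms by auto
  have "gnp_prob n ?p has_two_chord_path \<le> (\<Sum>l\<le>n. real n ^ l * real l ^ 2 * ?p ^ (l + 1))"
    by (rule gnp_prob_has_two_chord_path_le[OF p])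
  also have "\<dots> = (\<Sum>l\<le>n. real l ^ 2 * c ^ (l + 1)) / real n"
    using assms(3) by (simp add: sum_divide_distrib power_divide field_simps)
  also have "\<dots> \<le> (\<Sum>l. real l ^ 2 * c ^ (l + 1)) / real n"
    using summable_sq_times_power[OF assms(1,2)] assms
    by (intro divide_right_mono sum_le_suminf) auto
  finally have "1 - (\<Sum>l. real l ^ 2 * c ^ (l + 1)) / real n
                  \<le> gnp_prob n ?p (\<lambda>E. \<not> has_two_chord_path E)"
    by (simp add: gnp_prob_not)
  also have "\<dots> \<le> gnp_prob n ?p (distance_realizable_R2 {0..<n})"
    using p by (intro gnp_prob_mono distance_realizable_R2_if_no_two_chord_path) auto
  finally show ?thesis .
qed

theorem theorem5:
  fixes c :: real
  assumes "0 \<le> c" and "c < 1"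
  shows "(\<lambda>n. gnp_prob n (c / real n) (\<lambda>E. distance_realizable_R2 {0..<n} E))
           \<longlonglongrightarrow> 1"
proof (rule tendsto_sandwich)
  let ?P = "\<lambda>n. gnp_prob n (c / real n) (distance_realizable_R2 {0..<n})"
  define S where "S = (\<Sum>l. real l ^ 2 * c ^ (l + 1))"
  show "eventually (\<lambda>n. 1 - S / real n \<le> ?P n) sequentially"
    using gnp_prob_distance_realizable_R2_ge[OF assms]
    unfolding S_def eventually_at_top_linorder by blast
  show "eventually (\<lambda>n. ?P n \<le> 1) sequentially"
    using assms by (intro always_eventually allI gnp_prob_le_1) (auto simp: divide_le_eq_1)
  show "(\<lambda>n. 1 - S / real n) \<longlonglongrightarrow> 1"
    using tendsto_diff[OF tendsto_const lim_const_over_n[of S]] by simp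
qed simp

end
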